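(* Let $n\ge 2$, let $\mathcal{S}\subseteq(\mathbb{C}^d)^{\otimes n}$ be the permutation-symmetric subspace, let $|\psi\rangle\in\mathcal{S}$ and let $X$ be a $d\times d$ complex matrix with $X_{(1)}|\psi\rangle\in\mathcal{S}$. Then for every function $f$ analytic on an open set containing the eigenvalues of $X$, $f(X)_{(1)}|\psi\rangle\in\mathcal{S}$.
   Context: $\mathcal{S}$ is the set of vectors in $(\mathbb{C}^d)^{\otimes n}$ invariant under all permutations of the $n$ tensor factors. For a $d\times d$ matrix $Y$, $Y_{(1)}$ denotes $Y\otimes\mathbb{I}\otimes\cdots\otimes\mathbb{I}$ on $(\mathbb{C}^d)^{\otimes n}$. $f(X)$ is the standard matrix function of $X$ (determined by the values of $f$ and its derivatives at the eigenvalues of $X$, up to the size of the corresponding largest Jordan blocks). *)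

theory Defs
  imports "Jordan_Normal_Form.Jordan_Normal_Form" "HOL-Complex_Analysis.Complex_Analysis"
    "HOL-Combinatorics.Permutations"
begin

(* Vectors of (C^d)^{\<otimes>n} are functions on index words: lists of length n
   over {0..<d}; values outside this index set are irrelevant. *)
definition tensor_idx :: "nat \<Rightarrow> nat \<Rightarrow> nat list set" where
  "tensor_idx n d = {xs. length xs = n \<and> set xs \<subseteq> {..<d}}"

definition sym_tensor :: "nat \<Rightarrow> nat \<Rightarrow> (nat list \<Rightarrow> complex) \<Rightarrow> bool" where
  "sym_tensor n d \<psi> \<longleftrightarrow>
     (\<forall>xs\<in>tensor_idx n d. \<forall>\<sigma>. \<sigma> permutes {..<n} \<longrightarrow> \<psi> (permute_list \<sigma> xs) = \<psi> xs)"

(* Y_(1) = Y \<otimes> I \<otimes> ... \<otimes> I acting on the first tensor factor *)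
definition op_first :: "nat \<Rightarrow> complex mat \<Rightarrow> (nat list \<Rightarrow> complex) \<Rightarrow> (nat list \<Rightarrow> complex)" where
  "op_first d Y \<psi> = (\<lambda>xs. \<Sum>a<d. Y $$ (hd xs, a) * \<psi> (a # tl xs))"

definition poly_mat :: "complex poly \<Rightarrow> complex mat \<Rightarrow> complex mat" where
  "poly_mat p X = Matrix.mat (dim_row X) (dim_row X)
     (\<lambda>(i,j). \<Sum>k\<le>degree p. coeff p k * (X ^\<^sub>m k) $$ (i,j))"

(* standard (primary) matrix function: f(X) = p(X) for any polynomial p agreeing with f
   and its derivatives at each eigenvalue up to the required order *)
definition matrix_fun :: "(complex \<Rightarrow> complex) \<Rightarrow> complex mat \<Rightarrow> complex mat" where
  "matrix_fun f X = poly_mat (SOME p. \<forall>z. eigenvalue X z \<longrightarrow>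
       (\<forall>k < order z (char_poly X). poly ((pderiv ^^ k) p) z = (deriv ^^ k) f z)) X"

end

theory Submission
  imports Defs
begin

text \<open>If \<open>\<psi>\<close> and \<open>X\<^sub>(\<^sub>1\<^sub>)\<psi>\<close> are both symmetric, then transposing the first and the \<open>j\<close>-th
  factor shows that \<open>X\<close> acting on the \<open>j\<close>-th factor of \<open>\<psi>\<close> gives the same vector for every \<open>j\<close>.
  Since operators on different factors commute, this property passes from \<open>X\<close> to all powers of
  \<open>X\<close>, hence to every polynomial in \<open>X\<close>; and the matrix function \<open>f(X)\<close> is such a polynomial.\<close>

definition op_at :: "nat \<Rightarrow> nat \<Rightarrow> complex mat \<Rightarrow> (nat list \<Rightarrow> complex) \<Rightarrow> nat list \<Rightarrow> complex" where
  "op_at d j Y \<phi> = (\<lambda>xs. \<Sum>a<d. Y $$ (xs ! j, a) * \<phi> (xs[j := a]))"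

lemma tensor_idx_update: "xs \<in> tensor_idx n d \<Longrightarrow> a < d \<Longrightarrow> xs[j := a] \<in> tensor_idx n d"
  unfolding tensor_idx_def using set_update_subset_insert by fastforce

lemma tensor_idx_nth_less: "xs \<in> tensor_idx n d \<Longrightarrow> j < n \<Longrightarrow> xs ! j < d"
  unfolding tensor_idx_def using nth_mem by blast

lemma op_at_cong:
  assumes "\<And>ys. ys \<in> tensor_idx n d \<Longrightarrow> \<phi> ys = \<phi>' ys" "xs \<in> tensor_idx n d"
  shows "op_at d j Y \<phi> xs = op_at d j Y \<phi>' xs"
  unfolding op_at_def using assms tensor_idx_update by (intro sum.cong) auto

lemma op_at_one:
  assumes "xs \<in> tensor_idx n d" "j < n"
  shows "op_at d j (1\<^sub>m d) \<phi> xs = \<phi> xs"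
proof -
  have jd: "xs ! j < d" using tensor_idx_nth_less assms by auto
  have "op_at d j (1\<^sub>m d) \<phi> xs = (\<Sum>a<d. if xs ! j = a then \<phi> (xs[j := a]) else 0)"
    unfolding op_at_def using jd by (intro sum.cong) auto
  also have "\<dots> = \<phi> xs" using jd by (simp add: sum.delta)
  finally show ?thesis .
qed

lemma op_at_mult:
  assumes xs: "xs \<in> tensor_idx n d" and "j < n" "A \<in> carrier_mat d d" "B \<in> carrier_mat d d"
  shows "op_at d j A (op_at d j B \<phi>) xs = op_at d j (A * B) \<phi> xs"
proof -
  have len: "j < length xs" using assms unfolding tensor_idx_def by auto
  have jd: "xs ! j < d" using tensor_idx_nth_less assms by auto
  have entry: "(A * B) $$ (xs ! j, b) = (\<Sum>a<d. A $$ (xs ! j, a) * B $$ (a, b))" if "b < d" for b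
    using assms jd that by (simp add: scalar_prod_def atLeast0LessThan)
  have "op_at d j A (op_at d j B \<phi>) xs
      = (\<Sum>a<d. \<Sum>b<d. A $$ (xs ! j, a) * B $$ (a, b) * \<phi> (xs[j := b]))"
    unfolding op_at_def using len by (simp add: sum_distrib_left mult.assoc)
  also have "\<dots> = (\<Sum>b<d. \<Sum>a<d. A $$ (xs ! j, a) * B $$ (a, b) * \<phi> (xs[j := b]))"
    by (rule sum.swap)
  also have "\<dots> = op_at d j (A * B) \<phi> xs"
    unfolding op_at_def by (intro sum.cong) (simp_all add: entry sum_distrib_right)
  finally show ?thesis .
qed

lemma op_at_commute:
  assumes "xs \<in> tensor_idx n d" "i < n" "j < n" "i \<noteq> j"
  shows "op_at d i A (op_at d j B \<phi>) xs = op_at d j B (op_at d i A \<phi>) xs"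
proof -
  have len: "i < length xs" "j < length xs" using assms unfolding tensor_idx_def by auto
  have swap: "xs[i := a, j := b] = xs[j := b, i := a]" for a b
    using list_update_swap assms(4) by metis
  have "op_at d i A (op_at d j B \<phi>) xs
      = (\<Sum>a<d. \<Sum>b<d. A $$ (xs ! i, a) * (B $$ (xs ! j, b) * \<phi> (xs[i := a, j := b])))"
    unfolding op_at_def using len assms(4) by (simp add: sum_distrib_left)
  also have "\<dots> = (\<Sum>b<d. \<Sum>a<d. B $$ (xs ! j, b) * (A $$ (xs ! i, a) * \<phi> (xs[j := b, i := a])))"
    by (subst sum.swap) (simp only: swap mult.left_commute)
  also have "\<dots> = op_at d j B (op_at d i A \<phi>) xs"
    unfolding op_at_def using len assms(4) by (simp add: sum_distrib_left)
  finally show ?thesis .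
qed

lemma op_at_poly_mat:
  assumes "X \<in> carrier_mat d d" "xs \<in> tensor_idx n d" "j < n"
  shows "op_at d j (poly_mat p X) \<phi> xs = (\<Sum>k\<le>degree p. coeff p k * op_at d j (X ^\<^sub>m k) \<phi> xs)"
proof -
  have jd: "xs ! j < d" using tensor_idx_nth_less assms by auto
  have "op_at d j (poly_mat p X) \<phi> xs
      = (\<Sum>a<d. \<Sum>k\<le>degree p. coeff p k * ((X ^\<^sub>m k) $$ (xs ! j, a) * \<phi> (xs[j := a])))"
    unfolding op_at_def poly_mat_def using assms jd
    by (intro sum.cong) (auto simp: sum_distrib_right mult.assoc)
  also have "\<dots> = (\<Sum>k\<le>degree p. coeff p k * op_at d j (X ^\<^sub>m k) \<phi> xs)"
    unfolding op_at_def by (subst sum.swap) (simp add: sum_distrib_left)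
  finally show ?thesis .
qed

lemma mult_pow_mat_commute: "X \<in> carrier_mat d d \<Longrightarrow> X * X ^\<^sub>m k = X ^\<^sub>m k * X"
proof (induction k)
  case (Suc k)
  have "X * X ^\<^sub>m Suc k = (X * X ^\<^sub>m k) * X"
    using Suc.prems by (simp add: assoc_mult_mat[of X d d "X ^\<^sub>m k" d X d])
  then show ?case using Suc by simp
qed simp

lemma op_at_pow_mat_eq:
  assumes X: "X \<in> carrier_mat d d" and ij: "i < n" "j < n"
    and eq: "\<forall>ys\<in>tensor_idx n d. op_at d i X \<phi> ys = op_at d j X \<phi> ys"
    and xs: "xs \<in> tensor_idx n d"
  shows "op_at d i (X ^\<^sub>m k) \<phi> xs = op_at d j (X ^\<^sub>m k) \<phi> xs"
  using xs
proof (induction k arbitrary: xs)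
  case 0
  then show ?case using X ij by (simp add: op_at_one)
next
  case (Suc k)
  show ?case
  proof (cases "i = j")
    case False
    have Xk: "X ^\<^sub>m k \<in> carrier_mat d d" using X by simp
    have "op_at d j (X ^\<^sub>m Suc k) \<phi> xs = op_at d j (X ^\<^sub>m k) (op_at d j X \<phi>) xs"
      using op_at_mult[OF Suc.prems ij(2) Xk X] by simp
    also have "\<dots> = op_at d j (X ^\<^sub>m k) (op_at d i X \<phi>) xs"
      using eq by (intro op_at_cong[OF _ Suc.prems]) simp
    also have "\<dots> = op_at d i X (op_at d j (X ^\<^sub>m k) \<phi>) xs"
      using op_at_commute[OF Suc.prems ij] False by simp
    also have "\<dots> = op_at d i X (op_at d i (X ^\<^sub>m k) \<phi>) xs"
      using Suc.IH by (intro op_at_cong[OF _ Suc.prems]) simp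
    also have "\<dots> = op_at d i (X ^\<^sub>m Suc k) \<phi> xs"
      using op_at_mult[OF Suc.prems ij(1) X Xk] mult_pow_mat_commute[OF X] by simp
    finally show ?thesis by simp
  qed simp
qed

lemma op_at_poly_mat_eq:
  assumes "X \<in> carrier_mat d d" "i < n" "j < n"
    and "\<forall>ys\<in>tensor_idx n d. op_at d i X \<phi> ys = op_at d j X \<phi> ys"
    and "xs \<in> tensor_idx n d"
  shows "op_at d i (poly_mat p X) \<phi> xs = op_at d j (poly_mat p X) \<phi> xs"
  using op_at_pow_mat_eq[OF assms] by (simp add: op_at_poly_mat[OF assms(1,5)] assms(2,3))

lemma op_first_eq_op_at_0:
  assumes "xs \<in> tensor_idx n d" "0 < n"
  shows "op_first d Y \<phi> xs = op_at d 0 Y \<phi> xs"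
  using assms unfolding tensor_idx_def op_first_def op_at_def by (cases xs) auto

lemma permute_list_update_hd:
  assumes s: "\<sigma> permutes {..<length xs}" and "xs \<noteq> []"
  shows "a # tl (permute_list \<sigma> xs) = permute_list \<sigma> (xs[\<sigma> 0 := a])"
proof (rule nth_equalityI)
  have s': "\<sigma> permutes {..<length (xs[\<sigma> 0 := a])}" using s by simp
  have s0: "\<sigma> 0 < length xs" using permutes_in_image[OF s] assms(2) by simp
  fix i assume "i < length (a # tl (permute_list \<sigma> xs))"
  then have i: "i < length xs" using assms(2) by simp
  show "(a # tl (permute_list \<sigma> xs)) ! i = permute_list \<sigma> (xs[\<sigma> 0 := a]) ! i"
  proof (cases i)
    case 0
    then show ?thesis using permute_list_nth[OF s'] i s0 by simp
  next
    case (Suc m)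
    have "\<sigma> i \<noteq> \<sigma> 0" using permutes_inj[OF s] Suc by (metis inj_eq nat.simps(3))
    moreover have "\<sigma> i < length xs" using permutes_in_image[OF s] i by simp
    ultimately show ?thesis using Suc permute_list_nth[OF s'] permute_list_nth[OF s] i
      by (simp add: nth_tl)
  qed
qed (use assms(2) in simp)

lemma op_first_permute_list:
  assumes sym: "sym_tensor n d \<phi>" and xs: "xs \<in> tensor_idx n d"
    and s: "\<sigma> permutes {..<n}" and "0 < n"
  shows "op_first d Y \<phi> (permute_list \<sigma> xs) = op_at d (\<sigma> 0) Y \<phi> xs"
proof -
  have len: "length xs = n" using xs unfolding tensor_idx_def by auto
  then have s': "\<sigma> permutes {..<length xs}" and ne: "xs \<noteq> []" using s \<open>0 < n\<close> by auto
  have "permute_list \<sigma> xs \<noteq> []" using ne by (metis length_0_conv length_permute_list)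
  then have "hd (permute_list \<sigma> xs) = xs ! \<sigma> 0"
    using permute_list_nth[OF s', of 0] ne by (simp add: hd_conv_nth)
  then have "op_first d Y \<phi> (permute_list \<sigma> xs)
      = (\<Sum>a<d. Y $$ (xs ! \<sigma> 0, a) * \<phi> (permute_list \<sigma> (xs[\<sigma> 0 := a])))"
    unfolding op_first_def permute_list_update_hd[OF s' ne] by simp
  also have "\<dots> = op_at d (\<sigma> 0) Y \<phi> xs"
    unfolding op_at_def using sym tensor_idx_update[OF xs] s
    unfolding sym_tensor_def by (intro sum.cong) auto
  finally show ?thesis .
qed

lemma sym_tensor_op_first_iff:
  assumes sym: "sym_tensor n d \<psi>" and n: "0 < n"
  shows "sym_tensor n d (op_first d Y \<psi>) \<longleftrightarrow>
    (\<forall>j<n. \<forall>xs\<in>tensor_idx n d. op_at d j Y \<psi> xs = op_at d 0 Y \<psi> xs)"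
proof
  assume sym_Y: "sym_tensor n d (op_first d Y \<psi>)"
  show "\<forall>j<n. \<forall>xs\<in>tensor_idx n d. op_at d j Y \<psi> xs = op_at d 0 Y \<psi> xs"
  proof (intro allI impI ballI)
    fix j xs assume j: "j < n" and xs: "xs \<in> tensor_idx n d"
    have tp: "Transposition.transpose 0 j permutes {..<n}"
      using j n by (intro permutes_swap_id) auto
    have "op_at d j Y \<psi> xs = op_first d Y \<psi> (permute_list (Transposition.transpose 0 j) xs)"
      using op_first_permute_list[OF sym xs tp n] by simp
    also have "\<dots> = op_first d Y \<psi> xs" using sym_Y xs tp unfolding sym_tensor_def by blast
    finally show "op_at d j Y \<psi> xs = op_at d 0 Y \<psi> xs" using op_first_eq_op_at_0[OF xs n] by simp
  qed
next
  assume eq: "\<forall>j<n. \<forall>xs\<in>tensor_idx n d. op_at d j Y \<psi> xs = op_at d 0 Y \<psi> xs"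
  show "sym_tensor n d (op_first d Y \<psi>)"
    unfolding sym_tensor_def
  proof (intro ballI allI impI)
    fix xs \<sigma> assume xs: "xs \<in> tensor_idx n d" and s: "\<sigma> permutes {..<n}"
    have "\<sigma> 0 < n" using permutes_in_image[OF s] n by auto
    then have "op_at d (\<sigma> 0) Y \<psi> xs = op_at d 0 Y \<psi> xs" using eq xs by blast
    then show "op_first d Y \<psi> (permute_list \<sigma> xs) = op_first d Y \<psi> xs"
      using op_first_permute_list[OF sym xs s n] op_first_eq_op_at_0[OF xs n] by simp
  qed
qed

lemma sym_tensor_op_first_poly_mat:
  assumes "0 < n" "X \<in> carrier_mat d d"
    and sym: "sym_tensor n d \<psi>" and "sym_tensor n d (op_first d X \<psi>)"
  shows "sym_tensor n d (op_first d (poly_mat p X) \<psi>)"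
proof -
  have "\<forall>j<n. \<forall>xs\<in>tensor_idx n d. op_at d j X \<psi> xs = op_at d 0 X \<psi> xs"
    using assms sym_tensor_op_first_iff by blast
  then have "\<forall>j<n. \<forall>xs\<in>tensor_idx n d. op_at d j (poly_mat p X) \<psi> xs = op_at d 0 (poly_mat p X) \<psi> xs"
    using op_at_poly_mat_eq[OF assms(2)] assms(1) by blast
  then show ?thesis using sym_tensor_op_first_iff[OF sym assms(1)] by blast
qed

theorem corollary2:
  fixes n d :: nat and X :: "complex mat" and \<psi> :: "nat list \<Rightarrow> complex"
    and f :: "complex \<Rightarrow> complex" and U :: "complex set"
  assumes "n \<ge> 2"
    and "X \<in> carrier_mat d d"
    and "sym_tensor n d \<psi>"
    and "sym_tensor n d (op_first d X \<psi>)"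
    and "open U" and "{z. eigenvalue X z} \<subseteq> U" and "f holomorphic_on U"
  shows "sym_tensor n d (op_first d (matrix_fun f X) \<psi>)"
proof -
  txt \<open>Holomorphy of \<open>f\<close> only guarantees that \<open>f(X)\<close> is well defined; the conclusion holds for
    every polynomial in \<open>X\<close>, and \<open>matrix_fun f X\<close> is one by definition.\<close>
  obtain p where "matrix_fun f X = poly_mat p X" unfolding matrix_fun_def by blast
  moreover have "0 < n" using \<open>n \<ge> 2\<close> by simp
  ultimately show ?thesis using sym_tensor_op_first_poly_mat assms(2-4) by metis
qed

end
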